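(* Let $d\ge 0$ and $n>d$ be integers, and let $T\in L(n,d)$ with $T\neq\emptyset$. Then the poset ideal $\mathcal{I}_{n,d}(T)$ is isomorphic as a poset to the direct product $\prod_{T_i\in T}\mathcal{I}_{n,d}(\{T_i\})$, and both are isomorphic as posets to $\prod_{T_i\in T} L(n-|T_i|,\,d-|T_i|)$.
   Context: For a finite set $X$ let $\operatorname{codim}_d(X)=d+1-|X|$. For a finite collection $\{T_1,\dots,T_l\}$ of pairwise distinct finite sets put $\rho_d(\{T_1,\dots,T_l\})=\sum_{i=1}^l\operatorname{codim}_d(T_i)$ (with $\rho_d(\emptyset)=0$) and $D_d(\{T_1,\dots,T_l\})=\operatorname{codim}_d(T_1\cap\cdots\cap T_l)-\rho_d(\{T_1,\dots,T_l\})$. For integers $d\ge0$, $n>d$, $L(n,d)$ is the set of all collections $T$ of subsets of $\{1,\dots,n\}$ such that (i) $D_d(T')>0$ for every $T'\subset T$ with $|T'|>1$, and (ii) $0\le|T_i|\le d$ for every $T_i\in T$ (so $L(n,0)=\{\emptyset,\{\emptyset\}\}$). It is partially ordered by: $T<T'$ iff $\rho_d(T)<\rho_d(T')$ and for every $T_i\in T$ there exists $T'_j\in T'$ with $T'_j\subset T_i$; $T\le T'$ means $T<T'$ or $T=T'$. For $T\in L(n,d)$, $\mathcal{I}_{n,d}(T)=\{S\in L(n,d): S\le T\}$ with the induced order. Direct products of posets carry the componentwise order. *)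

theory Defs
  imports Main "HOL-Library.FuncSet"
begin

definition codim :: "nat \<Rightarrow> nat set \<Rightarrow> int" where
  "codim d X = int d + 1 - int (card X)"

definition rho :: "nat \<Rightarrow> nat set set \<Rightarrow> int" where
  "rho d T = (\<Sum>X\<in>T. codim d X)"

definition Dd :: "nat \<Rightarrow> nat set set \<Rightarrow> int" where
  "Dd d T = codim d (\<Inter>T) - rho d T"

definition Lset :: "nat \<Rightarrow> nat \<Rightarrow> nat set set set" where
  "Lset n d = {T. T \<subseteq> Pow {1..n}
                  \<and> (\<forall>T'. T' \<subseteq> T \<and> card T' > 1 \<longrightarrow> Dd d T' > 0)
                  \<and> (\<forall>X\<in>T. card X \<le> d)}"

definition lessL :: "nat \<Rightarrow> nat set set \<Rightarrow> nat set set \<Rightarrow> bool" where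
  "lessL d S T \<longleftrightarrow> rho d S < rho d T \<and> (\<forall>X\<in>S. \<exists>Y\<in>T. Y \<subseteq> X)"

definition leqL :: "nat \<Rightarrow> nat set set \<Rightarrow> nat set set \<Rightarrow> bool" where
  "leqL d S T \<longleftrightarrow> lessL d S T \<or> S = T"

definition idealL :: "nat \<Rightarrow> nat \<Rightarrow> nat set set \<Rightarrow> nat set set set" where
  "idealL n d T = {S \<in> Lset n d. leqL d S T}"

definition prod_le :: "'i set \<Rightarrow> ('i \<Rightarrow> 'a \<Rightarrow> 'a \<Rightarrow> bool) \<Rightarrow> ('i \<Rightarrow> 'a) \<Rightarrow> ('i \<Rightarrow> 'a) \<Rightarrow> bool" where
  "prod_le I le f g \<longleftrightarrow> (\<forall>i\<in>I. le i (f i) (g i))"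

definition poset_iso :: "'a set \<Rightarrow> ('a \<Rightarrow> 'a \<Rightarrow> bool) \<Rightarrow> 'b set \<Rightarrow> ('b \<Rightarrow> 'b \<Rightarrow> bool) \<Rightarrow> bool" where
  "poset_iso A ra B rb \<longleftrightarrow>
     (\<exists>f. bij_betw f A B \<and> (\<forall>x\<in>A. \<forall>y\<in>A. ra x y \<longleftrightarrow> rb (f x) (f y)))"

end

theory Submission
  imports Defs "HOL-Library.Disjoint_Sets"
begin

(*
  Condition (i) for a pair shows that two distinct members X, Y of some T in L(n,d) satisfy
  card (X \<union> Y) > d + 1, so a set with at most d elements contains at most one member of T.
  Hence on L(n,d) the order is plain refinement: S \<le> S' iff every member of S contains a member
  of S' (the increase of rho is then automatic unless S = S'). An element S \<le> T splits into the
  fibres {a \<in> S. X \<subseteq> a}, X \<in> T, and conversely a union of one element from each ideal of {X}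
  lies in L(n,d) again. Finally the ideal of {X} consists of the elements of L(n,d) all of whose
  members contain X; removing X and relabelling {1..n} - X as {1..n - card X} identifies it with
  L(n - card X, d - card X), because both maps preserve intersections and shift every codimension
  by the same amount.
*)

lemma poset_iso_trans:
  assumes "poset_iso A ra B rb" "poset_iso B rb C rc"
  shows "poset_iso A ra C rc"
proof -
  obtain f where f: "bij_betw f A B" "\<forall>x\<in>A. \<forall>y\<in>A. ra x y \<longleftrightarrow> rb (f x) (f y)"
    using assms(1) unfolding poset_iso_def by blast
  obtain g where g: "bij_betw g B C" "\<forall>x\<in>B. \<forall>y\<in>B. rb x y \<longleftrightarrow> rc (g x) (g y)"
    using assms(2) unfolding poset_iso_def by blast
  have "bij_betw (g \<circ> f) A C"
    using f(1) g(1) by (rule bij_betw_trans)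
  moreover have "\<forall>x\<in>A. \<forall>y\<in>A. ra x y \<longleftrightarrow> rc ((g \<circ> f) x) ((g \<circ> f) y)"
    using f g bij_betwE[OF f(1)] by simp
  ultimately show ?thesis
    unfolding poset_iso_def by blast
qed

lemma poset_iso_PiE:
  assumes "\<And>i. i \<in> I \<Longrightarrow> poset_iso (A i) (r i) (B i) (s i)"
  shows "poset_iso (PiE I A) (prod_le I r) (PiE I B) (prod_le I s)"
proof -
  obtain f where f: "\<And>i. i \<in> I \<Longrightarrow> bij_betw (f i) (A i) (B i)"
    and ord: "\<And>i. i \<in> I \<Longrightarrow> \<forall>x\<in>A i. \<forall>y\<in>A i. r i x y \<longleftrightarrow> s i (f i x) (f i y)"
    using assms unfolding poset_iso_def by metis
  define F where "F g = (\<lambda>i\<in>I. f i (g i))" for g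
  define G where "G k = (\<lambda>i\<in>I. inv_into (A i) (f i) (k i))" for k
  have "bij_betw F (PiE I A) (PiE I B)"
  proof (rule bij_betwI[where g = G])
    show "F \<in> PiE I A \<rightarrow> PiE I B" and "G \<in> PiE I B \<rightarrow> PiE I A"
      using bij_betwE[OF f] bij_betwE[OF bij_betw_inv_into[OF f]]
      by (auto simp: F_def G_def PiE_mem)
  next
    fix g
    assume g: "g \<in> PiE I A"
    have "G (F g) = (\<lambda>i\<in>I. g i)"
      unfolding G_def using g f by (intro restrict_ext) (simp add: F_def bij_betw_inv_into_left[OF f] PiE_mem[OF g])
    then show "G (F g) = g"
      using PiE_restrict[OF g] by simp
  next
    fix k
    assume k: "k \<in> PiE I B"
    have "F (G k) = (\<lambda>i\<in>I. k i)"
      unfolding F_def using k f by (intro restrict_ext) (simp add: G_def bij_betw_inv_into_right[OF f] PiE_mem[OF k])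
    then show "F (G k) = k"
      using PiE_restrict[OF k] by simp
  qed
  moreover have "\<forall>g\<in>PiE I A. \<forall>g'\<in>PiE I A. prod_le I r g g' \<longleftrightarrow> prod_le I s (F g) (F g')"
    using ord by (auto simp: prod_le_def F_def PiE_mem)
  ultimately show ?thesis
    unfolding poset_iso_def by blast
qed

definition Lset_on :: "nat set \<Rightarrow> nat \<Rightarrow> nat set set set" where
  "Lset_on V d = {T. T \<subseteq> Pow V
                     \<and> (\<forall>T'. T' \<subseteq> T \<and> card T' > 1 \<longrightarrow> Dd d T' > 0)
                     \<and> (\<forall>X\<in>T. card X \<le> d)}"

lemma Lset_eq_Lset_on: "Lset n d = Lset_on {1..n} d"
  by (simp add: Lset_def Lset_on_def)

definition covered_by :: "'a set set \<Rightarrow> 'a set set \<Rightarrow> bool" where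
  "covered_by S S' \<longleftrightarrow> (\<forall>a\<in>S. \<exists>b\<in>S'. b \<subseteq> a)"

definition supersets_in :: "'a set set \<Rightarrow> 'a set \<Rightarrow> 'a set set" where
  "supersets_in S X = {a\<in>S. X \<subseteq> a}"

lemma Lset_on_mono: "T \<in> Lset_on V d \<Longrightarrow> S \<subseteq> T \<Longrightarrow> S \<in> Lset_on V d"
  unfolding Lset_on_def by blast

lemma Lset_on_Dd_pos: "T \<in> Lset_on V d \<Longrightarrow> T' \<subseteq> T \<Longrightarrow> card T' > 1 \<Longrightarrow> Dd d T' > 0"
  unfolding Lset_on_def by blast

lemma Lset_on_card_le: "T \<in> Lset_on V d \<Longrightarrow> X \<in> T \<Longrightarrow> card X \<le> d"
  unfolding Lset_on_def by blast

lemma Lset_on_subset_Pow: "T \<in> Lset_on V d \<Longrightarrow> T \<subseteq> Pow V"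
  unfolding Lset_on_def by blast

lemma Lset_on_finite: "finite V \<Longrightarrow> T \<in> Lset_on V d \<Longrightarrow> finite T"
  using Lset_on_subset_Pow finite_subset[of T "Pow V"] by simp

lemma Lset_on_finite_member: "finite V \<Longrightarrow> T \<in> Lset_on V d \<Longrightarrow> X \<in> T \<Longrightarrow> finite X"
  using Lset_on_subset_Pow finite_subset[of X V] by blast

lemma Lset_on_singleton:
  assumes "X \<subseteq> V" "card X \<le> d"
  shows "{X} \<in> Lset_on V d"
proof -
  have "\<not> card T' > 1" if "T' \<subseteq> {X}" for T'
    using card_mono[OF _ that] by simp
  then show ?thesis
    using assms unfolding Lset_on_def by blast
qed

lemma card_Un_gt_of_Lset_on:
  assumes "finite V" "T \<in> Lset_on V d" "X \<in> T" "Y \<in> T" "X \<noteq> Y"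
  shows "card (X \<union> Y) > d + 1"
proof -
  have "Dd d {X, Y} > 0"
    using Lset_on_Dd_pos[OF assms(2), of "{X, Y}"] assms(3-5) by auto
  moreover have "card X + card Y = card (X \<union> Y) + card (X \<inter> Y)"
    using Lset_on_finite_member assms by (intro card_Un_Int) blast+
  ultimately show ?thesis
    using assms(5) by (simp add: Dd_def rho_def codim_def)
qed

lemma Lset_on_unique_below:
  assumes "finite V" "T \<in> Lset_on V d" "X \<in> T" "Y \<in> T" "X \<subseteq> a" "Y \<subseteq> a"
    and "finite a" "card a \<le> d"
  shows "X = Y"
proof (rule ccontr)
  assume "X \<noteq> Y"
  then have "card (X \<union> Y) > d + 1"
    using card_Un_gt_of_Lset_on assms(1-4) by blast
  moreover have "card (X \<union> Y) \<le> card a"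
    using assms(5-7) by (intro card_mono) auto
  ultimately show False
    using assms(8) by simp
qed

lemma disjoint_family_on_supersets_in:
  assumes "finite V" "T \<in> Lset_on V d" "\<And>a. a \<in> S \<Longrightarrow> finite a \<and> card a \<le> d"
  shows "disjoint_family_on (supersets_in S) T"
  unfolding disjoint_family_on_def supersets_in_def
  using Lset_on_unique_below[OF assms(1,2)] assms(3) by blast

lemma UN_supersets_in_eq: "covered_by S T \<Longrightarrow> (\<Union>X\<in>T. supersets_in S X) = S"
  unfolding covered_by_def supersets_in_def by blast

lemma rho_eq_sum_supersets_in:
  assumes "finite V" "T \<in> Lset_on V d" "covered_by S T" "finite S"
    and "\<And>a. a \<in> S \<Longrightarrow> finite a \<and> card a \<le> d"
  shows "rho d S = (\<Sum>X\<in>T. rho d (supersets_in S X))"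
proof -
  have "rho d (\<Union>X\<in>T. supersets_in S X) = (\<Sum>X\<in>T. rho d (supersets_in S X))"
    unfolding rho_def using assms Lset_on_finite disjoint_family_on_supersets_in
    by (intro sum.UNION_disjoint_family) (auto simp: supersets_in_def)
  then show ?thesis
    using UN_supersets_in_eq[OF assms(3)] by simp
qed

lemma finite_set_cases:
  assumes "finite A"
  obtains "A = {}" | a where "A = {a}" | "card A > 1"
proof -
  consider "card A = 0" | "card A = 1" | "card A > 1"
    by linarith
  then show ?thesis
    using assms that by cases (auto simp: card_1_singleton_iff)
qed

lemma rho_le_codim_Inter:
  assumes "finite V" "T \<in> Lset_on V d" "T \<noteq> {}"
  shows "rho d T \<le> codim d (\<Inter>T)"
  using Lset_on_finite[OF assms(1,2)]
proof (cases rule: finite_set_cases)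
  case 3
  then show ?thesis
    using Lset_on_Dd_pos[OF assms(2) order_refl] by (simp add: Dd_def)
qed (use assms(3) in \<open>simp_all add: rho_def\<close>)

lemma rho_less_codim_of_common_subset:
  assumes "finite V" "A \<in> Lset_on V d" "finite b" "card b \<le> d" "\<forall>a\<in>A. b \<subseteq> a" "A \<noteq> {b}"
  shows "rho d A < codim d b"
  using Lset_on_finite[OF assms(1,2)]
proof (cases rule: finite_set_cases)
  case 1
  then show ?thesis
    using assms(4) by (simp add: rho_def codim_def)
next
  case (2 a)
  then have "b \<subset> a"
    using assms(5,6) by auto
  moreover have "finite a"
    using Lset_on_finite_member assms(1,2) 2 by blast
  ultimately have "card b < card a"
    by (simp add: psubset_card_mono)
  then show ?thesis
    using 2 by (simp add: rho_def codim_def)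
next
  case 3
  then obtain a where a: "a \<in> A"
    by fastforce
  have "finite (\<Inter>A)"
    using Lset_on_finite_member[OF assms(1,2) a] Inter_lower[OF a] finite_subset by blast
  then have "card b \<le> card (\<Inter>A)"
    using assms(5) by (intro card_mono) auto
  then have "codim d (\<Inter>A) \<le> codim d b"
    by (simp add: codim_def)
  with Lset_on_Dd_pos[OF assms(2) order_refl 3] show ?thesis
    by (simp add: Dd_def)
qed

lemma leqL_iff_covered_by:
  assumes V: "finite V" and S: "S \<in> Lset_on V d" and S': "S' \<in> Lset_on V d"
  shows "leqL d S S' \<longleftrightarrow> covered_by S S'"
proof
  show "leqL d S S' \<Longrightarrow> covered_by S S'"
    unfolding leqL_def lessL_def covered_by_def by auto
next
  assume cov: "covered_by S S'"
  have member: "a \<in> S \<Longrightarrow> finite a \<and> card a \<le> d" for a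
    using Lset_on_finite_member[OF V S] Lset_on_card_le[OF S] by blast
  have fibre: "rho d (supersets_in S b) < codim d b \<or> supersets_in S b = {b}" if "b \<in> S'" for b
  proof (rule disjCI)
    assume "supersets_in S b \<noteq> {b}"
    moreover have "supersets_in S b \<in> Lset_on V d"
      using Lset_on_mono[OF S] by (simp add: supersets_in_def)
    ultimately show "rho d (supersets_in S b) < codim d b"
      using rho_less_codim_of_common_subset[OF V]
        Lset_on_finite_member[OF V S' that] Lset_on_card_le[OF S' that]
      by (simp add: supersets_in_def)
  qed
  show "leqL d S S'"
  proof (cases "\<forall>b\<in>S'. supersets_in S b = {b}")
    case True
    then have "S = S'"
      using UN_supersets_in_eq[OF cov] by simp
    then show ?thesis
      by (simp add: leqL_def)
  next
    case False
    have "rho d S = (\<Sum>b\<in>S'. rho d (supersets_in S b))"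
      using rho_eq_sum_supersets_in[OF V S' cov Lset_on_finite[OF V S] member] .
    also have "\<dots> < (\<Sum>b\<in>S'. codim d b)"
    proof (rule sum_strict_mono_ex1[OF Lset_on_finite[OF V S']])
      show "\<forall>b\<in>S'. rho d (supersets_in S b) \<le> codim d b"
        using fibre by (force simp: rho_def)
      show "\<exists>b\<in>S'. rho d (supersets_in S b) < codim d b"
        using fibre False by blast
    qed
    finally have "rho d S < rho d S'"
      by (simp add: rho_def)
    with cov show ?thesis
      unfolding leqL_def lessL_def covered_by_def by auto
  qed
qed

lemma card_INT_le:
  assumes "finite A" "A \<noteq> {}" "\<And>X. X \<in> A \<Longrightarrow> X \<subseteq> B X" "\<And>X. X \<in> A \<Longrightarrow> finite (B X)"
  shows "card (\<Inter>X\<in>A. B X) \<le> card (\<Inter>A) + (\<Sum>X\<in>A. card (B X - X))"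
proof -
  have fin: "finite (\<Inter>A)"
    using assms(2-4) by (meson Inter_lower ex_in_conv finite_subset)
  have "(\<Inter>X\<in>A. B X) \<subseteq> \<Inter>A \<union> (\<Union>X\<in>A. B X - X)"
    by blast
  then have "card (\<Inter>X\<in>A. B X) \<le> card (\<Inter>A \<union> (\<Union>X\<in>A. B X - X))"
    using fin assms(1,4) by (intro card_mono) auto
  also have "\<dots> \<le> card (\<Inter>A) + card (\<Union>X\<in>A. B X - X)"
    by (rule card_Un_le)
  also have "card (\<Union>X\<in>A. B X - X) \<le> (\<Sum>X\<in>A. card (B X - X))"
    using assms(1) by (rule card_UN_le)
  finally show ?thesis
    by simp
qed

text \<open>The defect of A pays for the points of \<open>\<Inter>(P X) - X\<close> lost from the common intersection.\<close>
lemma Dd_pos_UN: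
  assumes V: "finite V" and A: "A \<in> Lset_on V d" "card A > 1"
    and disj: "disjoint_family_on P A"
    and P: "\<And>X. X \<in> A \<Longrightarrow> P X \<in> Lset_on V d" "\<And>X. X \<in> A \<Longrightarrow> P X \<noteq> {}"
    and above: "\<And>X a. X \<in> A \<Longrightarrow> a \<in> P X \<Longrightarrow> X \<subseteq> a"
  shows "Dd d (\<Union>X\<in>A. P X) > 0"
proof -
  let ?B = "\<lambda>X. \<Inter>(P X)"
  have finA: "finite A"
    using Lset_on_finite[OF V A(1)] .
  have XB: "X \<subseteq> ?B X" if "X \<in> A" for X
    using above that by blast
  have finB: "finite (?B X)" if X: "X \<in> A" for X
  proof -
    obtain a where "a \<in> P X"
      using P(2)[OF X] by blast
    then have "?B X \<subseteq> a"
      by (rule Inter_lower)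
    then show ?thesis
      using Lset_on_finite_member[OF V P(1)[OF X] \<open>a \<in> P X\<close>] by (rule finite_subset)
  qed
  have finX: "finite X" if "X \<in> A" for X
    using finB[OF that] XB[OF that] finite_subset by blast
  have card_gap: "int (card (?B X - X)) = codim d X - codim d (?B X)" if "X \<in> A" for X
    using card_Diff_subset[OF finX XB] card_mono[OF finB XB] that by (simp add: codim_def)
  have "rho d (\<Union>X\<in>A. P X) = (\<Sum>X\<in>A. rho d (P X))"
    unfolding rho_def using finA Lset_on_finite[OF V P(1)] disj
    by (intro sum.UNION_disjoint_family) auto
  also have "\<dots> \<le> (\<Sum>X\<in>A. codim d (?B X))"
    using rho_le_codim_Inter[OF V P] by (intro sum_mono)
  also have "\<dots> < codim d (\<Inter>A) - (\<Sum>X\<in>A. codim d X - codim d (?B X))"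
    using Lset_on_Dd_pos[OF A(1) order_refl A(2)] by (simp add: Dd_def rho_def sum_subtractf)
  also have "\<dots> = codim d (\<Inter>A) - int (\<Sum>X\<in>A. card (?B X - X))"
    using card_gap by simp
  also have "\<dots> \<le> codim d (\<Inter>X\<in>A. ?B X)"
  proof -
    have "card (\<Inter>X\<in>A. ?B X) \<le> card (\<Inter>A) + (\<Sum>X\<in>A. card (?B X - X))"
      using A(2) by (intro card_INT_le[OF finA _ XB finB]) auto
    then show ?thesis
      unfolding codim_def by linarith
  qed
  also have "(\<Inter>X\<in>A. ?B X) = \<Inter>(\<Union>X\<in>A. P X)"
    by blast
  finally show ?thesis
    by (simp add: Dd_def)
qed

lemma UN_Lset_on_member:
  assumes V: "finite V" and g: "\<And>X. X \<in> T \<Longrightarrow> g X \<in> Lset_on V d"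
    and a: "a \<in> (\<Union>X\<in>T. g X)"
  shows "finite a \<and> card a \<le> d"
proof -
  obtain X where "X \<in> T" "a \<in> g X"
    using a by blast
  then show ?thesis
    using Lset_on_finite_member[OF V g] Lset_on_card_le[OF g] by blast
qed

lemma supersets_in_UN:
  assumes V: "finite V" and T: "T \<in> Lset_on V d" and X: "X \<in> T"
    and g: "\<And>Y. Y \<in> T \<Longrightarrow> g Y \<in> Lset_on V d" "\<And>Y a. Y \<in> T \<Longrightarrow> a \<in> g Y \<Longrightarrow> Y \<subseteq> a"
  shows "supersets_in (\<Union>Y\<in>T. g Y) X = g X"
proof
  show "g X \<subseteq> supersets_in (\<Union>Y\<in>T. g Y) X"
    using X g(2) by (auto simp: supersets_in_def)
  show "supersets_in (\<Union>Y\<in>T. g Y) X \<subseteq> g X"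
  proof
    fix a
    assume "a \<in> supersets_in (\<Union>Y\<in>T. g Y) X"
    then obtain Y where Y: "Y \<in> T" "a \<in> g Y" and "X \<subseteq> a"
      by (auto simp: supersets_in_def)
    moreover have "finite a \<and> card a \<le> d"
      using Y by (intro UN_Lset_on_member[where T = T and g = g, OF V g(1)] UN_I)
    ultimately have "Y = X"
      using Lset_on_unique_below[OF V T Y(1) X g(2)[OF Y]] by blast
    then show "a \<in> g X"
      using Y by simp
  qed
qed

lemma covered_by_subset_UN:
  assumes g: "\<And>X a. X \<in> T \<Longrightarrow> a \<in> g X \<Longrightarrow> X \<subseteq> a" and T': "T' \<subseteq> (\<Union>X\<in>T. g X)"
  shows "covered_by T' {X\<in>T. supersets_in T' X \<noteq> {}}"
  unfolding covered_by_def
proof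
  fix a
  assume a: "a \<in> T'"
  then obtain X where X: "X \<in> T" "a \<in> g X"
    using T' by blast
  then have "X \<subseteq> a"
    by (rule g)
  with a X(1) show "\<exists>X\<in>{X\<in>T. supersets_in T' X \<noteq> {}}. X \<subseteq> a"
    unfolding supersets_in_def by blast
qed

lemma Dd_pos_of_subset_UN:
  assumes V: "finite V" and T: "T \<in> Lset_on V d"
    and g: "\<And>X. X \<in> T \<Longrightarrow> g X \<in> Lset_on V d" "\<And>X a. X \<in> T \<Longrightarrow> a \<in> g X \<Longrightarrow> X \<subseteq> a"
    and T': "T' \<subseteq> (\<Union>X\<in>T. g X)" "card T' > 1"
  shows "Dd d T' > 0"
proof -
  define A where "A = {X\<in>T. supersets_in T' X \<noteq> {}}"
  have AT: "A \<subseteq> T"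
    by (simp add: A_def)
  have cov: "covered_by T' A"
    unfolding A_def using g(2) T'(1) by (rule covered_by_subset_UN)
  have fibre_sub: "supersets_in T' X \<subseteq> g X" if "X \<in> T" for X
  proof -
    have "supersets_in T' X \<subseteq> supersets_in (\<Union>X\<in>T. g X) X"
      using T'(1) by (auto simp: supersets_in_def)
    then show ?thesis
      using supersets_in_UN[OF V T that g] by simp
  qed
  show ?thesis
    using finite_subset[OF AT Lset_on_finite[OF V T]]
  proof (cases rule: finite_set_cases)
    case 1
    then show ?thesis
      using UN_supersets_in_eq[OF cov] T'(2) by simp
  next
    case (2 X)
    then have "T' = supersets_in T' X"
      using UN_supersets_in_eq[OF cov] by simp
    then have "T' \<subseteq> g X"
      using fibre_sub AT 2 by auto
    then show ?thesis
      using Lset_on_Dd_pos[OF g(1) _ T'(2)] 2 AT by blast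
  next
    case 3
    have "disjoint_family_on (supersets_in T') T"
      using disjoint_family_on_supersets_in[OF V T UN_Lset_on_member[OF V g(1) subsetD[OF T'(1)]]] .
    then have "disjoint_family_on (supersets_in T') A"
      using AT by (rule disjoint_family_on_mono[rotated])
    moreover have "supersets_in T' X \<in> Lset_on V d" if "X \<in> A" for X
      using Lset_on_mono[OF g(1) fibre_sub] that AT by blast
    moreover have "supersets_in T' X \<noteq> {}" if "X \<in> A" for X
      using that by (simp add: A_def)
    moreover have "X \<subseteq> a" if "a \<in> supersets_in T' X" for X a
      using that by (simp add: supersets_in_def)
    ultimately have "Dd d (\<Union>X\<in>A. supersets_in T' X) > 0"
      by (rule Dd_pos_UN[OF V Lset_on_mono[OF T AT] 3])
    then show ?thesis
      using UN_supersets_in_eq[OF cov] by simp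
  qed
qed

lemma UN_in_Lset_on:
  assumes V: "finite V" and T: "T \<in> Lset_on V d"
    and g: "\<And>X. X \<in> T \<Longrightarrow> g X \<in> Lset_on V d" "\<And>X a. X \<in> T \<Longrightarrow> a \<in> g X \<Longrightarrow> X \<subseteq> a"
  shows "(\<Union>X\<in>T. g X) \<in> Lset_on V d"
proof -
  have "(\<Union>X\<in>T. g X) \<subseteq> Pow V"
    using Lset_on_subset_Pow[OF g(1)] by blast
  moreover have "card a \<le> d" if "a \<in> (\<Union>X\<in>T. g X)" for a
    using UN_Lset_on_member[OF V g(1) that] by blast
  moreover have "Dd d T' > 0" if "T' \<subseteq> (\<Union>X\<in>T. g X)" "card T' > 1" for T'
    using Dd_pos_of_subset_UN[OF V T g that] .
  ultimately show ?thesis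
    unfolding Lset_on_def by blast
qed

locale Lset_relabelling =
  fixes V W :: "nat set" and D :: "nat set set" and \<phi> :: "nat set \<Rightarrow> nat set" and k d :: nat
  assumes finite_V: "finite V"
    and D_subset: "D \<subseteq> Pow V"
    and bij: "bij_betw \<phi> D (Pow W)"
    and Inter_mem: "\<And>U. U \<subseteq> D \<Longrightarrow> U \<noteq> {} \<Longrightarrow> \<Inter>U \<in> D"
    and Inter_image: "\<And>U. U \<subseteq> D \<Longrightarrow> U \<noteq> {} \<Longrightarrow> \<phi> (\<Inter>U) = \<Inter>(\<phi> ` U)"
    and card_shift: "\<And>a. a \<in> D \<Longrightarrow> card a = card (\<phi> a) + k"
    and k_le: "k \<le> d"
begin

lemma inj_on_phi: "inj_on \<phi> D"
  using bij by (rule bij_betw_imp_inj_on)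

lemma finite_W: "finite W"
  using bij_betw_finite[OF bij] finite_subset[OF D_subset] finite_V by simp

lemma phi_subset_phi_iff: "a \<in> D \<Longrightarrow> b \<in> D \<Longrightarrow> \<phi> a \<subseteq> \<phi> b \<longleftrightarrow> a \<subseteq> b"
proof -
  assume ab: "a \<in> D" "b \<in> D"
  then have "\<phi> (a \<inter> b) = \<phi> a \<inter> \<phi> b" and "a \<inter> b \<in> D"
    using Inter_image[of "{a, b}"] Inter_mem[of "{a, b}"] by auto
  then have "\<phi> a \<inter> \<phi> b = \<phi> a \<longleftrightarrow> a \<inter> b = a"
    using inj_on_eq_iff[OF inj_on_phi] ab by metis
  then show ?thesis
    by blast
qed

lemma codim_eq: "a \<in> D \<Longrightarrow> codim (d - k) (\<phi> a) = codim d a"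
  using card_shift k_le by (simp add: codim_def)

lemma Dd_image_eq:
  assumes "U \<subseteq> D" "U \<noteq> {}"
  shows "Dd (d - k) (\<phi> ` U) = Dd d U"
proof -
  have "rho (d - k) (\<phi> ` U) = (\<Sum>a\<in>U. codim (d - k) (\<phi> a))"
    unfolding rho_def using inj_on_subset[OF inj_on_phi assms(1)] by (simp add: sum.reindex)
  also have "\<dots> = rho d U"
    unfolding rho_def using assms(1) codim_eq by (intro sum.cong) auto
  finally have "rho (d - k) (\<phi> ` U) = rho d U" .
  moreover have "codim (d - k) (\<Inter>(\<phi> ` U)) = codim d (\<Inter>U)"
    using codim_eq[OF Inter_mem[OF assms]] Inter_image[OF assms] by simp
  ultimately show ?thesis
    by (simp add: Dd_def)
qed

lemma image_in_Lset_on_iff: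
  assumes S: "S \<subseteq> D"
  shows "\<phi> ` S \<in> Lset_on W (d - k) \<longleftrightarrow> S \<in> Lset_on V d"
proof -
  have card_eq: "card (\<phi> ` U) = card U" if "U \<subseteq> S" for U
    using card_image inj_on_subset[OF inj_on_phi] that S by blast
  have "\<phi> ` S \<subseteq> Pow W" and "S \<subseteq> Pow V"
    using bij_betwE[OF bij] S D_subset by blast+
  moreover have "(\<forall>a\<in>S. card (\<phi> a) \<le> d - k) \<longleftrightarrow> (\<forall>a\<in>S. card a \<le> d)"
    using card_shift S k_le by fastforce
  moreover have "(card (\<phi> ` U) > 1 \<longrightarrow> Dd (d - k) (\<phi> ` U) > 0) \<longleftrightarrow> (card U > 1 \<longrightarrow> Dd d U > 0)"
    if "U \<subseteq> S" for U
    using card_eq[OF that] Dd_image_eq[of U] that S by (cases "U = {}") auto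
  then have "(\<forall>U. U \<subseteq> \<phi> ` S \<longrightarrow> card U > 1 \<longrightarrow> Dd (d - k) U > 0)
      \<longleftrightarrow> (\<forall>U. U \<subseteq> S \<longrightarrow> card U > 1 \<longrightarrow> Dd d U > 0)"
    unfolding all_subset_image by blast
  ultimately show ?thesis
    unfolding Lset_on_def by auto
qed

lemma bij_betw_image_Lset_on:
  "bij_betw (image \<phi>) {S \<in> Lset_on V d. S \<subseteq> D} (Lset_on W (d - k))"
proof (rule bij_betw_imageI)
  show "inj_on (image \<phi>) {S \<in> Lset_on V d. S \<subseteq> D}"
    using inj_on_image_eq_iff[OF inj_on_phi] by (intro inj_onI) blast
  show "image \<phi> ` {S \<in> Lset_on V d. S \<subseteq> D} = Lset_on W (d - k)"
  proof
    show "image \<phi> ` {S \<in> Lset_on V d. S \<subseteq> D} \<subseteq> Lset_on W (d - k)"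
      using image_in_Lset_on_iff by blast
    show "Lset_on W (d - k) \<subseteq> image \<phi> ` {S \<in> Lset_on V d. S \<subseteq> D}"
    proof
      fix R
      assume R: "R \<in> Lset_on W (d - k)"
      then have "R \<subseteq> \<phi> ` D"
        using Lset_on_subset_Pow bij by (simp add: bij_betw_def)
      then obtain S where "S \<subseteq> D" "R = \<phi> ` S"
        by (auto simp: subset_image_iff)
      then show "R \<in> image \<phi> ` {S \<in> Lset_on V d. S \<subseteq> D}"
        using R image_in_Lset_on_iff by blast
    qed
  qed
qed

lemma leqL_image_iff:
  assumes S: "S \<in> Lset_on V d" "S \<subseteq> D" and S': "S' \<in> Lset_on V d" "S' \<subseteq> D"
  shows "leqL (d - k) (\<phi> ` S) (\<phi> ` S') \<longleftrightarrow> leqL d S S'"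
proof -
  have "covered_by (\<phi> ` S) (\<phi> ` S') \<longleftrightarrow> (\<forall>a\<in>S. \<exists>b\<in>S'. \<phi> b \<subseteq> \<phi> a)"
    by (simp add: covered_by_def)
  also have "\<dots> \<longleftrightarrow> covered_by S S'"
    unfolding covered_by_def using S(2) S'(2) by (intro ball_cong bex_cong refl phi_subset_phi_iff) auto
  finally have "covered_by (\<phi> ` S) (\<phi> ` S') \<longleftrightarrow> covered_by S S'" .
  moreover have "\<phi> ` S \<in> Lset_on W (d - k)" "\<phi> ` S' \<in> Lset_on W (d - k)"
    using S S' image_in_Lset_on_iff by auto
  ultimately show ?thesis
    using S S' leqL_iff_covered_by[OF finite_V] leqL_iff_covered_by[OF finite_W] by auto
qed

lemma poset_iso: "poset_iso {S \<in> Lset_on V d. S \<subseteq> D} (leqL d) (Lset_on W (d - k)) (leqL (d - k))"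
  unfolding poset_iso_def
proof (intro exI conjI ballI)
  fix S S'
  assume "S \<in> {S \<in> Lset_on V d. S \<subseteq> D}" "S' \<in> {S \<in> Lset_on V d. S \<subseteq> D}"
  then show "leqL d S S' \<longleftrightarrow> leqL (d - k) (\<phi> ` S) (\<phi> ` S')"
    using leqL_image_iff by simp
qed (rule bij_betw_image_Lset_on)

end

lemma covered_by_iff_supersets_in:
  assumes V: "finite V" and T: "T \<in> Lset_on V d" and S: "S \<in> Lset_on V d"
    and cov_T: "covered_by S T" "covered_by S' T"
  shows "covered_by S S' \<longleftrightarrow> (\<forall>X\<in>T. covered_by (supersets_in S X) (supersets_in S' X))"
proof
  assume cov: "covered_by S S'"
  show "\<forall>X\<in>T. covered_by (supersets_in S X) (supersets_in S' X)"
    unfolding covered_by_def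
  proof (intro ballI)
    fix X a
    assume X: "X \<in> T" and "a \<in> supersets_in S X"
    then have a: "a \<in> S" "X \<subseteq> a"
      by (auto simp: supersets_in_def)
    then obtain b where b: "b \<in> S'" "b \<subseteq> a"
      using cov by (auto simp: covered_by_def)
    then obtain Y where Y: "Y \<in> T" "Y \<subseteq> b"
      using cov_T(2) by (auto simp: covered_by_def)
    have "Y \<subseteq> a"
      using Y(2) b(2) by (rule subset_trans)
    then have "Y = X"
      using Lset_on_unique_below[OF V T Y(1) X _ a(2)]
        Lset_on_finite_member[OF V S a(1)] Lset_on_card_le[OF S a(1)] by blast
    then show "\<exists>b\<in>supersets_in S' X. b \<subseteq> a"
      using b Y by (auto simp: supersets_in_def)
  qed
next
  assume fibres: "\<forall>X\<in>T. covered_by (supersets_in S X) (supersets_in S' X)"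
  show "covered_by S S'"
    unfolding covered_by_def
  proof
    fix a
    assume a: "a \<in> S"
    then obtain X where "X \<in> T" "X \<subseteq> a"
      using cov_T(1) by (auto simp: covered_by_def)
    then have "a \<in> supersets_in S X" and "covered_by (supersets_in S X) (supersets_in S' X)"
      using a fibres by (auto simp: supersets_in_def)
    then show "\<exists>b\<in>S'. b \<subseteq> a"
      unfolding covered_by_def supersets_in_def by blast
  qed
qed

lemma idealL_eq:
  assumes "T \<in> Lset n d"
  shows "idealL n d T = {S \<in> Lset_on {1..n} d. covered_by S T}"
  using leqL_iff_covered_by[of "{1..n}" _ d T] assms
  unfolding idealL_def Lset_eq_Lset_on by auto

lemma idealL_singleton_eq:
  assumes "X \<subseteq> {1..n}" "card X \<le> d"
  shows "idealL n d {X} = {S \<in> Lset_on {1..n} d. \<forall>a\<in>S. X \<subseteq> a}"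
  using idealL_eq[of "{X}"] Lset_on_singleton[OF assms]
  by (simp add: Lset_eq_Lset_on covered_by_def)

lemma Lset_member: "T \<in> Lset n d \<Longrightarrow> X \<in> T \<Longrightarrow> X \<subseteq> {1..n} \<and> card X \<le> d"
  unfolding Lset_def by blast

lemma bij_betw_idealL_PiE:
  assumes T: "T \<in> Lset n d"
  shows "bij_betw (\<lambda>S. \<lambda>X\<in>T. supersets_in S X) (idealL n d T) (PiE T (\<lambda>X. idealL n d {X}))"
proof (rule bij_betwI[where g = "\<lambda>g. \<Union>X\<in>T. g X"])
  let ?V = "{1..n}"
  have V: "finite ?V" and T': "T \<in> Lset_on ?V d"
    using T by (simp_all add: Lset_eq_Lset_on)
  have factor: "idealL n d {X} = {S \<in> Lset_on ?V d. \<forall>a\<in>S. X \<subseteq> a}" if "X \<in> T" for X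
    using idealL_singleton_eq Lset_member[OF T that] by blast
  have factor_mem: "g X \<in> Lset_on ?V d \<and> (\<forall>a\<in>g X. X \<subseteq> a)"
    if "g \<in> PiE T (\<lambda>X. idealL n d {X})" "X \<in> T" for g X
    using PiE_mem[OF that] factor[OF that(2)] by simp
  show "(\<lambda>S. \<lambda>X\<in>T. supersets_in S X) \<in> idealL n d T \<rightarrow> PiE T (\<lambda>X. idealL n d {X})"
    using Lset_on_mono by (auto simp: idealL_eq[OF T] factor supersets_in_def)
  show "(\<lambda>g. \<Union>X\<in>T. g X) \<in> PiE T (\<lambda>X. idealL n d {X}) \<rightarrow> idealL n d T"
  proof
    fix g
    assume "g \<in> PiE T (\<lambda>X. idealL n d {X})"
    then have g: "\<And>X. X \<in> T \<Longrightarrow> g X \<in> Lset_on ?V d" "\<And>X a. X \<in> T \<Longrightarrow> a \<in> g X \<Longrightarrow> X \<subseteq> a"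
      using factor_mem by blast+
    have "(\<Union>X\<in>T. g X) \<in> Lset_on ?V d"
      using V T' g by (rule UN_in_Lset_on)
    moreover have "covered_by (\<Union>X\<in>T. g X) T"
      unfolding covered_by_def using g(2) by blast
    ultimately show "(\<Union>X\<in>T. g X) \<in> idealL n d T"
      by (simp add: idealL_eq[OF T])
  qed
  show "(\<Union>X\<in>T. (\<lambda>X\<in>T. supersets_in S X) X) = S" if "S \<in> idealL n d T" for S
    using that UN_supersets_in_eq[of S T] by (simp add: idealL_eq[OF T])
  show "(\<lambda>X\<in>T. supersets_in (\<Union>X\<in>T. g X) X) = g" if g: "g \<in> PiE T (\<lambda>X. idealL n d {X})" for g
  proof -
    have "(\<lambda>X\<in>T. supersets_in (\<Union>X\<in>T. g X) X) = (\<lambda>X\<in>T. g X)"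
    proof (rule restrict_ext)
      fix X
      assume "X \<in> T"
      then show "supersets_in (\<Union>X\<in>T. g X) X = g X"
        using factor_mem[OF g] by (intro supersets_in_UN[OF V T']) auto
    qed
    then show ?thesis
      using PiE_restrict[OF g] by simp
  qed
qed

lemma leqL_iff_prod_le_supersets_in:
  assumes T: "T \<in> Lset n d" and S: "S \<in> idealL n d T" "S' \<in> idealL n d T"
  shows "leqL d S S' \<longleftrightarrow> prod_le T (\<lambda>X. leqL d) (\<lambda>X\<in>T. supersets_in S X) (\<lambda>X\<in>T. supersets_in S' X)"
proof -
  have V: "finite {1..n}" and T': "T \<in> Lset_on {1..n} d"
    using T by (simp_all add: Lset_eq_Lset_on)
  have S': "S \<in> Lset_on {1..n} d" "S' \<in> Lset_on {1..n} d" "covered_by S T" "covered_by S' T"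
    using S by (simp_all add: idealL_eq[OF T])
  have "leqL d S S' \<longleftrightarrow> (\<forall>X\<in>T. covered_by (supersets_in S X) (supersets_in S' X))"
    using leqL_iff_covered_by[OF V S'(1,2)] covered_by_iff_supersets_in[OF V T' S'(1) S'(3,4)] by simp
  also have "\<dots> \<longleftrightarrow> prod_le T (\<lambda>X. leqL d) (\<lambda>X\<in>T. supersets_in S X) (\<lambda>X\<in>T. supersets_in S' X)"
    unfolding prod_le_def using leqL_iff_covered_by[OF V] Lset_on_mono S'(1,2)
    by (simp add: supersets_in_def)
  finally show ?thesis .
qed

lemma idealL_poset_iso_PiE:
  assumes "T \<in> Lset n d"
  shows "poset_iso (idealL n d T) (leqL d) (PiE T (\<lambda>X. idealL n d {X})) (prod_le T (\<lambda>X. leqL d))"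
  unfolding poset_iso_def
proof (intro exI conjI ballI)
  show "bij_betw (\<lambda>S. \<lambda>X\<in>T. supersets_in S X) (idealL n d T) (PiE T (\<lambda>X. idealL n d {X}))"
    using assms by (rule bij_betw_idealL_PiE)
  fix S S'
  assume "S \<in> idealL n d T" "S' \<in> idealL n d T"
  with assms show "leqL d S S' \<longleftrightarrow> prod_le T (\<lambda>X. leqL d) (\<lambda>X\<in>T. supersets_in S X) (\<lambda>X\<in>T. supersets_in S' X)"
    by (rule leqL_iff_prod_le_supersets_in)
qed

lemma Lset_on_link_poset_iso:
  assumes V: "finite V" and X: "X \<subseteq> V" "card X \<le> d"
  shows "poset_iso {S \<in> Lset_on V d. \<forall>a\<in>S. X \<subseteq> a} (leqL d)
           (Lset_on (V - X) (d - card X)) (leqL (d - card X))"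
proof -
  let ?D = "{a. X \<subseteq> a \<and> a \<subseteq> V}"
  have "Lset_relabelling V (V - X) ?D (\<lambda>a. a - X) (card X) d"
  proof
    show "bij_betw (\<lambda>a. a - X) ?D (Pow (V - X))"
      by (rule bij_betwI[where g = "\<lambda>b. b \<union> X"]) (use X(1) in auto)
    show "card a = card (a - X) + card X" if "a \<in> ?D" for a
    proof -
      have "finite a" "X \<subseteq> a"
        using that V finite_subset by auto
      then show ?thesis
        using card_Diff_subset[OF finite_subset] card_mono by (metis le_add_diff_inverse2)
    qed
    show "\<Inter>U \<in> ?D" if "U \<subseteq> ?D" "U \<noteq> {}" for U
      using that by blast
  qed (use V X in auto)
  then have "poset_iso {S \<in> Lset_on V d. S \<subseteq> ?D} (leqL d) (Lset_on (V - X) (d - card X)) (leqL (d - card X))"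
    by (rule Lset_relabelling.poset_iso)
  moreover have "{S \<in> Lset_on V d. S \<subseteq> ?D} = {S \<in> Lset_on V d. \<forall>a\<in>S. X \<subseteq> a}"
    using Lset_on_subset_Pow by blast
  ultimately show ?thesis
    by simp
qed

lemma Lset_on_bij_poset_iso:
  assumes "finite V" "bij_betw h V W"
  shows "poset_iso (Lset_on V d) (leqL d) (Lset_on W d) (leqL d)"
proof -
  have inj: "inj_on h V"
    using assms(2) by (rule bij_betw_imp_inj_on)
  have "Lset_relabelling V W (Pow V) (image h) 0 d"
  proof
    show "bij_betw (image h) (Pow V) (Pow W)"
      using assms(2) by (rule bij_betw_Pow)
    show "image h (\<Inter>U) = \<Inter>(image h ` U)" if "U \<subseteq> Pow V" "U \<noteq> {}" for U
      using image_INT[OF inj, of U id] that by auto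
    show "card a = card (h ` a) + 0" if "a \<in> Pow V" for a
      using card_image[OF inj_on_subset[OF inj]] that by simp
  qed (use assms in auto)
  then have "poset_iso {S \<in> Lset_on V d. S \<subseteq> Pow V} (leqL d) (Lset_on W (d - 0)) (leqL (d - 0))"
    by (rule Lset_relabelling.poset_iso)
  moreover have "{S \<in> Lset_on V d. S \<subseteq> Pow V} = Lset_on V d"
    using Lset_on_subset_Pow by blast
  ultimately show ?thesis
    by simp
qed

lemma idealL_singleton_poset_iso_Lset:
  assumes X: "X \<subseteq> {1..n}" "card X \<le> d"
  shows "poset_iso (idealL n d {X}) (leqL d) (Lset (n - card X) (d - card X)) (leqL (d - card X))"
proof -
  have "card ({1..n} - X) = card {1..n - card X}"
    using card_Diff_subset[OF finite_subset[OF X(1)] X(1)] by simp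
  then obtain h where "bij_betw h ({1..n} - X) {1..n - card X}"
    using finite_same_card_bij by blast
  then have "poset_iso (Lset_on ({1..n} - X) (d - card X)) (leqL (d - card X))
               (Lset (n - card X) (d - card X)) (leqL (d - card X))"
    unfolding Lset_eq_Lset_on by (intro Lset_on_bij_poset_iso) auto
  with Lset_on_link_poset_iso[OF _ X] show ?thesis
    unfolding idealL_singleton_eq[OF X] by (blast intro: poset_iso_trans)
qed

theorem theorem3p1:
  fixes n d :: nat and T :: "nat set set"
  assumes "d < n" and "T \<in> Lset n d" and "T \<noteq> {}"
  shows "poset_iso (idealL n d T) (leqL d)
           (PiE T (\<lambda>X. idealL n d {X})) (prod_le T (\<lambda>X. leqL d))
       \<and> poset_iso (idealL n d T) (leqL d)
           (PiE T (\<lambda>X. Lset (n - card X) (d - card X))) (prod_le T (\<lambda>X. leqL (d - card X)))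
       \<and> poset_iso (PiE T (\<lambda>X. idealL n d {X})) (prod_le T (\<lambda>X. leqL d))
           (PiE T (\<lambda>X. Lset (n - card X) (d - card X))) (prod_le T (\<lambda>X. leqL (d - card X)))"
proof -
  have ideal_iso: "poset_iso (idealL n d T) (leqL d) (PiE T (\<lambda>X. idealL n d {X})) (prod_le T (\<lambda>X. leqL d))"
    using assms(2) by (rule idealL_poset_iso_PiE)
  have factor_iso: "poset_iso (PiE T (\<lambda>X. idealL n d {X})) (prod_le T (\<lambda>X. leqL d))
      (PiE T (\<lambda>X. Lset (n - card X) (d - card X))) (prod_le T (\<lambda>X. leqL (d - card X)))"
  proof (rule poset_iso_PiE)
    fix X
    assume "X \<in> T"
    then have "X \<subseteq> {1..n}" "card X \<le> d"
      using Lset_member[OF assms(2)] by simp_all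
    then show "poset_iso (idealL n d {X}) (leqL d) (Lset (n - card X) (d - card X)) (leqL (d - card X))"
      by (rule idealL_singleton_poset_iso_Lset)
  qed
  show ?thesis
    using ideal_iso factor_iso poset_iso_trans[OF ideal_iso factor_iso] by blast
qed

end
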